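(* Let $R$ be a Bézout domain and let $A,B,C\in R^{n\times n}$ satisfy $ABA=ACA$. If $AB$ is Drazin invertible, then there exists $k\in\mathbb{N}$ such that $(AB)^s$ is similar to $(CA)^s$ for every integer $s\geq k$.
   Context: A Bézout domain is an integral domain in which every finitely generated ideal is principal. A matrix $M\in R^{n\times n}$ is Drazin invertible if there exists $X\in R^{n\times n}$ with $MX=XM$, $XMX=X$ and $M^{m+1}X=M^m$ for some nonnegative integer $m$; such $X$ is unique and denoted $M^D$. Two matrices $M,N\in R^{n\times n}$ are similar if $M=S^{-1}NS$ for some invertible $S\in R^{n\times n}$. *)

theory Defs
  imports "Jordan_Normal_Form.Matrix"
begin

definition fg_ideal :: "'a::comm_ring_1 set \<Rightarrow> 'a set" where
  "fg_ideal F = {x. \<exists>c. x = (\<Sum>f\<in>F. c f * f)}"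

class bezout_domain = idom +
  assumes fg_ideal_principal: "finite (F :: 'a set) \<Longrightarrow>
     \<exists>d. {x. \<exists>c. x = (\<Sum>f\<in>F. c f * f)} = {r * d | r. True}"

definition drazin_inverse :: "'a::semiring_1 mat \<Rightarrow> 'a mat \<Rightarrow> bool" where
  "drazin_inverse M X \<longleftrightarrow> X \<in> carrier_mat (dim_row M) (dim_row M) \<and>
     M * X = X * M \<and> X * M * X = X \<and> (\<exists>m. M ^\<^sub>m (m + 1) * X = M ^\<^sub>m m)"

definition drazin_invertible :: "'a::semiring_1 mat \<Rightarrow> bool" where
  "drazin_invertible M \<longleftrightarrow> (\<exists>X. drazin_inverse M X)"

end

theory Submission
  imports Defs "Jordan_Normal_Form.Determinant"
begin

text \<open>
  Put \<open>M = A B\<close>, \<open>N = C A\<close> and let \<open>X\<close> be the Drazin inverse of \<open>M\<close>. The hypothesis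
  \<open>A B A = A C A\<close> gives \<open>M\<^sup>s A = A N\<^sup>s\<close>, and \<open>G = M X A\<close>, \<open>H = C X\<close> satisfy \<open>G H G = G\<close>,
  \<open>H G H = H\<close>. Once \<open>s\<close> exceeds the index of \<open>M\<close>, \<open>G\<close> intertwines \<open>M\<^sup>s\<close> with \<open>N\<^sup>s\<close>, while the
  idempotents \<open>G H\<close> and \<open>H G\<close> act as the identity on \<open>M\<^sup>s\<close> and \<open>N\<^sup>s\<close> respectively.
  Over a Bezout domain every idempotent matrix is similar to \<open>diag(1,\<dots>,1,0,\<dots>,0)\<close>, and a
  determinant argument shows that \<open>G H\<close> and \<open>H G\<close> have the same number of ones. Hence the
  complementary idempotents \<open>1 - G H\<close> and \<open>1 - H G\<close> are matched by some \<open>W\<close>, \<open>W'\<close> as well,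
  \<open>G + W\<close> is invertible with inverse \<open>H + W'\<close>, and it conjugates \<open>N\<^sup>s\<close> into \<open>M\<^sup>s\<close>.
\<close>

definition inverse_mats :: "nat \<Rightarrow> 'a::semiring_1 mat \<Rightarrow> 'a mat \<Rightarrow> bool" where
  "inverse_mats n U V \<longleftrightarrow>
     U \<in> carrier_mat n n \<and> V \<in> carrier_mat n n \<and> U * V = 1\<^sub>m n \<and> V * U = 1\<^sub>m n"

lemma inverse_mats_one: "inverse_mats n (1\<^sub>m n) (1\<^sub>m n)"
  unfolding inverse_mats_def by simp

lemma inverse_mats_sym: "inverse_mats n U V \<Longrightarrow> inverse_mats n V U"
  unfolding inverse_mats_def by blast

lemma inverse_mats_cancel:
  assumes "inverse_mats n U V" and "X \<in> carrier_mat n m"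
  shows "U * (V * X) = X"
proof -
  have "U * (V * X) = (U * V) * X"
    using assms unfolding inverse_mats_def by (metis assoc_mult_mat)
  also have "\<dots> = X" using assms by (simp add: inverse_mats_def)
  finally show ?thesis .
qed

lemma inverse_mats_mult:
  assumes "inverse_mats n U V" and "inverse_mats n U' V'"
  shows "inverse_mats n (U' * U) (V * V')"
  using assms inverse_mats_cancel[OF assms(1)] inverse_mats_cancel[OF inverse_mats_sym[OF assms(2)]]
  unfolding inverse_mats_def by (auto simp: assoc_mult_mat[of _ n n _ n _ n])

lemma inverse_mats_four_block:
  assumes "inverse_mats n1 U1 V1" and "inverse_mats n2 U2 V2"
  shows "inverse_mats (n1 + n2) (four_block_mat U1 (0\<^sub>m n1 n2) (0\<^sub>m n2 n1) U2)
    (four_block_mat V1 (0\<^sub>m n1 n2) (0\<^sub>m n2 n1) V2)"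
  using assms unfolding inverse_mats_def
  by (auto simp: mult_four_block_mat[of _ n1 n1 _ n2 _ n2 _ _ n1 _ n2])

lemma similar_mat_inverse_matsI:
  assumes "inverse_mats n P Q" and "B \<in> carrier_mat n n"
  shows "similar_mat (P * B * Q) B"
  using assms unfolding inverse_mats_def by (intro similar_matI[of _ _ P Q n]) auto

lemma similar_mat_inverse_matsE:
  assumes "similar_mat A B" and "A \<in> carrier_mat n n"
  obtains P Q where "inverse_mats n P Q" and "B \<in> carrier_mat n n" and "A = P * B * Q"
  using assms unfolding similar_mat_def inverse_mats_def by (blast dest: similar_mat_witD2)

lemma similar_mat_conj:
  assumes UV: "inverse_mats n U V" and E: "E \<in> carrier_mat n n"
  shows "similar_mat E (U * E * V)"
proof -
  have U: "U \<in> carrier_mat n n" and V: "V \<in> carrier_mat n n" and VU: "V * U = 1\<^sub>m n"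
    using UV by (auto simp: inverse_mats_def)
  have "V * (U * E * V) * U = E"
    using U V E VU
    by (simp add: assoc_mult_mat[of _ n n _ n _ n] inverse_mats_cancel[OF inverse_mats_sym[OF UV]])
  then show ?thesis
    using similar_mat_inverse_matsI[OF inverse_mats_sym[OF UV], of "U * E * V"] U V E by simp
qed

lemma inverse_mats_conj_idem:
  assumes UV: "inverse_mats n U V" and E: "E \<in> carrier_mat n n" and EE: "E * E = E"
  shows "U * E * V * (U * E * V) = U * E * V"
proof -
  note mat_simps = assoc_mult_mat[of _ n n _ n _ n] mult_carrier_mat[of _ n n _ n]
  have U: "U \<in> carrier_mat n n" and V: "V \<in> carrier_mat n n"
    using UV by (auto simp: inverse_mats_def)
  have "V * (U * (E * V)) = E * V"
    by (rule inverse_mats_cancel[OF inverse_mats_sym[OF UV] mult_carrier_mat[OF E V]])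
  moreover have "E * (E * V) = E * V"
    using E V EE by (simp flip: mat_simps(1))
  ultimately show ?thesis
    using U E V by (simp add: mat_simps)
qed

lemma uminus_zero_mat[simp]: "- 0\<^sub>m nr nc = (0\<^sub>m nr nc :: 'a::group_add mat)"
  by (rule eq_matI) auto

lemma four_block_mat_inj:
  assumes eq: "four_block_mat A B C D = four_block_mat A' B' C' D'"
    and c: "A \<in> carrier_mat nr1 nc1" "B \<in> carrier_mat nr1 nc2"
      "C \<in> carrier_mat nr2 nc1" "D \<in> carrier_mat nr2 nc2"
      "A' \<in> carrier_mat nr1 nc1" "B' \<in> carrier_mat nr1 nc2"
      "C' \<in> carrier_mat nr2 nc1" "D' \<in> carrier_mat nr2 nc2"
  shows "A = A'" and "B = B'" and "C = C'" and "D = D'"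
proof -
  have same: "four_block_mat A B C D $$ (i, j) = four_block_mat A' B' C' D' $$ (i, j)" for i j
    by (simp add: eq)
  show "A = A'"
  proof (rule eq_matI)
    fix i j assume "i < dim_row A'" and "j < dim_col A'"
    then show "A $$ (i, j) = A' $$ (i, j)" using same[of i j] c by auto
  qed (use c in auto)
  show "B = B'"
  proof (rule eq_matI)
    fix i j assume "i < dim_row B'" and "j < dim_col B'"
    then show "B $$ (i, j) = B' $$ (i, j)" using same[of i "nc1 + j"] c by auto
  qed (use c in auto)
  show "C = C'"
  proof (rule eq_matI)
    fix i j assume "i < dim_row C'" and "j < dim_col C'"
    then show "C $$ (i, j) = C' $$ (i, j)" using same[of "nr1 + i" j] c by auto
  qed (use c in auto)
  show "D = D'"
  proof (rule eq_matI)
    fix i j assume "i < dim_row D'" and "j < dim_col D'"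
    then show "D $$ (i, j) = D' $$ (i, j)" using same[of "nr1 + i" "nc1 + j"] c by auto
  qed (use c in auto)
qed

lemma four_block_one_mult_vCons:
  fixes A :: "'a::semiring_1 mat"
  assumes A: "A \<in> carrier_mat n n" and w: "w \<in> carrier_vec n"
  shows "four_block_mat (1\<^sub>m 1) (0\<^sub>m 1 n) (0\<^sub>m n 1) A *\<^sub>v vCons a w = vCons a (A *\<^sub>v w)"
proof -
  let ?M = "four_block_mat (1\<^sub>m 1) (0\<^sub>m 1 n) (0\<^sub>m n 1) A"
  have a: "vCons a vNil \<in> carrier_vec 1" by simp
  have z: "0\<^sub>m 1 n *\<^sub>v w = 0\<^sub>v 1" "0\<^sub>m n 1 *\<^sub>v vCons a vNil = 0\<^sub>v n"
    using w by (auto intro!: eq_vecI)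
  have "?M *\<^sub>v vCons a w = ?M *\<^sub>v (vCons a vNil @\<^sub>v w)" by simp
  also have "\<dots> = (1\<^sub>m 1 *\<^sub>v vCons a vNil + 0\<^sub>m 1 n *\<^sub>v w) @\<^sub>v (0\<^sub>m n 1 *\<^sub>v vCons a vNil + A *\<^sub>v w)"
    by (rule four_block_mat_mult_vec[OF one_carrier_mat zero_carrier_mat zero_carrier_mat A a w])
  also have "\<dots> = vCons a (A *\<^sub>v w)"
    unfolding z one_mult_mat_vec[OF a] right_zero_vec[OF a]
      left_zero_vec[OF mult_mat_vec_carrier[OF A w]] by simp
  finally show ?thesis .
qed

lemma four_block_drop_corner_similar:
  fixes w E :: "'a::comm_ring_1 mat"
  assumes w: "w \<in> carrier_mat 1 n" and E: "E \<in> carrier_mat n n" and wE: "w * E = 0\<^sub>m 1 n"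
  shows "similar_mat (four_block_mat (1\<^sub>m 1) w (0\<^sub>m n 1) E)
    (four_block_mat (1\<^sub>m 1) (0\<^sub>m 1 n) (0\<^sub>m n 1) E)"
proof -
  let ?T = "four_block_mat (1\<^sub>m 1) w (0\<^sub>m n 1) (1\<^sub>m n)"
  let ?T' = "four_block_mat (1\<^sub>m 1) (- w) (0\<^sub>m n 1) (1\<^sub>m n)"
  let ?D = "four_block_mat (1\<^sub>m 1) (0\<^sub>m 1 n) (0\<^sub>m n 1) E"
  have "?T \<in> carrier_mat (Suc n) (Suc n)" and "?T' \<in> carrier_mat (Suc n) (Suc n)"
    using four_block_carrier_mat[OF one_carrier_mat[of 1] one_carrier_mat[of n]] by simp_all
  moreover have "w + - w = 0\<^sub>m 1 n"
    using w by (auto intro!: eq_matI)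
  ultimately have "inverse_mats (Suc n) ?T' ?T"
    unfolding inverse_mats_def using w
    by (simp add: mult_four_block_mat[of _ 1 1 _ n _ n _ _ 1 _ n])
  moreover have "?T' * ?D * ?T = four_block_mat (1\<^sub>m 1) w (0\<^sub>m n 1) E"
    using w E wE by (simp add: mult_four_block_mat[of _ 1 1 _ n _ n _ _ 1 _ n])
  ultimately show ?thesis
    using similar_mat_inverse_matsI[of "Suc n" ?T' ?T ?D] four_block_carrier_mat[OF one_carrier_mat[of 1] E]
    by simp
qed

lemma det_zero_row:
  fixes A :: "'a::comm_ring_1 mat"
  assumes A: "A \<in> carrier_mat n n" and k: "k < n" and zero: "\<And>j. j < n \<Longrightarrow> A $$ (k, j) = 0"
  shows "det A = 0"
proof -
  have "(\<Prod>i = 0..<n. A $$ (i, p i)) = 0" if "p permutes {0..<n}" for p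
    using k zero permutes_in_image[OF that, of k] by (intro prod_zero bexI[of _ k]) auto
  then show ?thesis unfolding det_def'[OF A] by simp
qed

section \<open>Reducing a column over a Bezout domain\<close>

lemma bezout_coprime_cofactors:
  fixes a b :: "'a::bezout_domain"
  obtains d a' b' x y where "a = a' * d" and "b = b' * d" and "x * a' + y * b' = 1"
proof -
  obtain d where I: "fg_ideal {a, b} = {r * d | r. True}"
    using fg_ideal_principal[of "{a, b}"] unfolding fg_ideal_def by auto
  have in_I: "x * a + y * b \<in> fg_ideal {a, b}" for x y
  proof (cases "a = b")
    case True
    then show ?thesis
      unfolding fg_ideal_def by (auto intro!: exI[of _ "\<lambda>_. x + y"] simp: algebra_simps)
  next
    case False
    then show ?thesis
      unfolding fg_ideal_def by (auto intro!: exI[of _ "\<lambda>f. if f = a then x else y"])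
  qed
  have "d \<in> fg_ideal {a, b}" unfolding I by (auto intro: exI[of _ 1])
  then obtain c where c: "d = (\<Sum>f\<in>{a, b}. c f * f)" unfolding fg_ideal_def by blast
  have "\<exists>x y. d = x * a + y * b"
  proof (cases "a = b")
    case True
    then show ?thesis using c by (intro exI[of _ "c a"] exI[of _ 0]) simp
  next
    case False
    then show ?thesis using c by auto
  qed
  then obtain x y where d: "d = x * a + y * b" by blast
  obtain a' where a': "a = a' * d" using in_I[of 1 0] unfolding I by auto
  obtain b' where b': "b = b' * d" using in_I[of 0 1] unfolding I by auto
  show thesis
  proof (cases "d = 0")
    case True
    have "a = 1 * d" and "b = 0 * d" and "1 * 1 + 0 * 0 = (1::'a)"
      using a' b' True by simp_all
    then show thesis by (rule that)
  next
    case False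
    have "(x * a' + y * b') * d = 1 * d" using d a' b' by (simp add: algebra_simps)
    with False a' b' show thesis by (metis that mult_cancel_right)
  qed
qed

lemma bezout_unimodular_2x2:
  fixes a b :: "'a::bezout_domain"
  obtains d G H where "inverse_mats 2 G H"
    and "G *\<^sub>v vCons a (vCons b vNil) = vCons d (vCons 0 vNil)"
proof -
  obtain d a' b' x y where a: "a = a' * d" and b: "b = b' * d" and xy: "x * a' + y * b' = 1"
    by (rule bezout_coprime_cofactors)
  \<comment> \<open>\<open>G\<close> has determinant \<open>x a' + y b' = 1\<close> and \<open>H\<close> is its adjugate.\<close>
  define G where "G = mat 2 2 (\<lambda>(i, j). [[x, y], [- b', a']] ! i ! j)"
  define H where "H = mat 2 2 (\<lambda>(i, j). [[a', - y], [b', x]] ! i ! j)"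
  have "a' * x + b' * y = 1" using xy by (simp add: mult.commute)
  then have "inverse_mats 2 G H"
    unfolding inverse_mats_def G_def H_def
    by (auto intro!: eq_matI simp: scalar_prod_def numeral_2_eq_2 less_Suc_eq algebra_simps)
  moreover have "x * a + y * b = (x * a' + y * b') * d" and "- b' * a + a' * b = 0"
    unfolding a b by (simp_all add: algebra_simps)
  then have "G *\<^sub>v vCons a (vCons b vNil) = vCons d (vCons 0 vNil)"
    using xy by (intro eq_vecI) (auto simp: G_def scalar_prod_def numeral_2_eq_2 less_Suc_eq)
  ultimately show thesis by (rule that)
qed

lemma bezout_reduce_two_entries:
  fixes a b :: "'a::bezout_domain"
  obtains d U V where "inverse_mats (Suc n) U V"
    and "U *\<^sub>v vCons a (b \<cdot>\<^sub>v unit_vec n 0) = d \<cdot>\<^sub>v unit_vec (Suc n) 0"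
proof (cases n)
  case 0
  have "1\<^sub>m (Suc n) *\<^sub>v vCons a (b \<cdot>\<^sub>v unit_vec n 0) = a \<cdot>\<^sub>v unit_vec (Suc n) 0"
    using 0 by (intro eq_vecI) auto
  then show thesis using inverse_mats_one by (rule that[rotated])
next
  case (Suc k)
  obtain d G H where GH: "inverse_mats 2 G H"
    and Gab: "G *\<^sub>v vCons a (vCons b vNil) = vCons d (vCons 0 vNil)"
    by (rule bezout_unimodular_2x2)
  have G: "G \<in> carrier_mat 2 2" using GH by (simp add: inverse_mats_def)
  have UV: "inverse_mats (2 + k) (four_block_mat G (0\<^sub>m 2 k) (0\<^sub>m k 2) (1\<^sub>m k))
    (four_block_mat H (0\<^sub>m 2 k) (0\<^sub>m k 2) (1\<^sub>m k))"
    using inverse_mats_four_block[OF GH inverse_mats_one] .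
  have ab: "vCons a (b \<cdot>\<^sub>v unit_vec n 0) = vCons a (vCons b vNil) @\<^sub>v 0\<^sub>v k"
    using Suc by (intro eq_vecI) (auto simp: vec_index_vCons nth_Cons')
  have d: "d \<cdot>\<^sub>v unit_vec (Suc n) 0 = vCons d (vCons 0 vNil) @\<^sub>v 0\<^sub>v k"
    using Suc by (intro eq_vecI) (auto simp: vec_index_vCons)
  have u: "vCons a (vCons b vNil) \<in> carrier_vec 2" "vCons d (vCons 0 vNil) \<in> carrier_vec 2"
    by (simp_all add: numeral_2_eq_2)
  have z: "0\<^sub>m 2 k *\<^sub>v 0\<^sub>v k = 0\<^sub>v 2" "0\<^sub>m k 2 *\<^sub>v vCons a (vCons b vNil) = 0\<^sub>v k"
    using u(1) by (auto intro!: eq_vecI)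
  have "four_block_mat G (0\<^sub>m 2 k) (0\<^sub>m k 2) (1\<^sub>m k) *\<^sub>v vCons a (b \<cdot>\<^sub>v unit_vec n 0)
    = d \<cdot>\<^sub>v unit_vec (Suc n) 0"
    unfolding ab d z
      four_block_mat_mult_vec[OF G zero_carrier_mat zero_carrier_mat one_carrier_mat u(1) zero_carrier_vec]
    using u(2) Gab by simp
  then show thesis using UV Suc by (intro that) simp_all
qed

lemma bezout_reduce_vec:
  fixes v :: "'a::bezout_domain vec"
  assumes "v \<in> carrier_vec n"
  shows "\<exists>d U V. inverse_mats n U V \<and> U *\<^sub>v v = d \<cdot>\<^sub>v unit_vec n 0"
  using assms
proof (induction n arbitrary: v)
  case 0
  then have "1\<^sub>m 0 *\<^sub>v v = 0 \<cdot>\<^sub>v unit_vec 0 0" by (intro eq_vecI) auto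
  then show ?case using inverse_mats_one by blast
next
  case (Suc n)
  define w where "w = vec n (\<lambda>i. v $ Suc i)"
  have w: "w \<in> carrier_vec n" and v: "v = vCons (v $ 0) w"
    using Suc.prems by (auto intro!: eq_vecI simp: w_def vec_index_vCons)
  obtain b U' V' where UV': "inverse_mats n U' V'" and U'w: "U' *\<^sub>v w = b \<cdot>\<^sub>v unit_vec n 0"
    using Suc.IH[OF w] by blast
  obtain d K L where KL: "inverse_mats (Suc n) K L"
    and K: "K *\<^sub>v vCons (v $ 0) (b \<cdot>\<^sub>v unit_vec n 0) = d \<cdot>\<^sub>v unit_vec (Suc n) 0"
    by (rule bezout_reduce_two_entries)
  let ?M = "four_block_mat (1\<^sub>m 1) (0\<^sub>m 1 n) (0\<^sub>m n 1) U'"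
  let ?M' = "four_block_mat (1\<^sub>m 1) (0\<^sub>m 1 n) (0\<^sub>m n 1) V'"
  have MM': "inverse_mats (Suc n) ?M ?M'"
    using inverse_mats_four_block[OF inverse_mats_one[of 1] UV'] by simp
  have "(K * ?M) *\<^sub>v v = K *\<^sub>v (?M *\<^sub>v v)"
    using KL MM' Suc.prems by (auto simp: inverse_mats_def)
  also have "?M *\<^sub>v v = vCons (v $ 0) (U' *\<^sub>v w)"
    using UV' w by (subst v, intro four_block_one_mult_vCons) (auto simp: inverse_mats_def)
  finally show ?case using K U'w inverse_mats_mult[OF MM' KL] by auto
qed

section \<open>Idempotent matrices over a Bezout domain\<close>

definition proj_mat :: "nat \<Rightarrow> nat \<Rightarrow> 'a::zero_neq_one mat" where
  "proj_mat n r = mat n n (\<lambda>(i, j). if i = j \<and> i < r then 1 else 0)"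

lemma proj_mat_dim[simp]: "dim_row (proj_mat n r) = n" "dim_col (proj_mat n r) = n"
  unfolding proj_mat_def by simp_all

lemma proj_mat_carrier[simp]: "proj_mat n r \<in> carrier_mat n n"
  by (simp add: carrier_matI)

lemma proj_mat_0: "proj_mat n 0 = 0\<^sub>m n n"
  by (rule eq_matI) (auto simp: proj_mat_def)

lemma proj_mat_Suc:
  "proj_mat (Suc n) (Suc r) = four_block_mat (1\<^sub>m 1) (0\<^sub>m 1 n) (0\<^sub>m n 1) (proj_mat n r)"
  by (rule eq_matI) (auto simp: proj_mat_def)

lemma proj_mat_mult_index:
  fixes A :: "'a::semiring_1 mat"
  assumes "A \<in> carrier_mat n m" and "i < n" and "j < m"
  shows "(proj_mat n r * A) $$ (i, j) = (if i < r then A $$ (i, j) else 0)"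
proof -
  have "(proj_mat n r * A) $$ (i, j) = (\<Sum>k\<in>{0..<n}. proj_mat n r $$ (i, k) * A $$ (k, j))"
    using assms by (simp add: scalar_prod_def)
  also have "\<dots> = (\<Sum>k\<in>{0..<n}. if k = i then (if i < r then A $$ (i, j) else 0) else 0)"
    using assms by (intro sum.cong) (auto simp: proj_mat_def)
  finally show ?thesis using assms by simp
qed

lemma proj_mat_idem: "proj_mat n r * proj_mat n r = (proj_mat n r :: 'a::semiring_1 mat)"
proof (rule eq_matI)
  fix i j assume "i < dim_row (proj_mat n r :: 'a mat)" and "j < dim_col (proj_mat n r :: 'a mat)"
  then show "(proj_mat n r * proj_mat n r) $$ (i, j) = (proj_mat n r :: 'a mat) $$ (i, j)"
    by (subst proj_mat_mult_index[of _ n n]) (auto simp: proj_mat_def)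
qed auto

lemma idempotent_complement:
  fixes D :: "'a::comm_ring_1 mat"
  assumes D: "D \<in> carrier_mat n n" and DD: "D * D = D"
  shows "D * (1\<^sub>m n - D) = 0\<^sub>m n n" and "(1\<^sub>m n - D) * D = 0\<^sub>m n n"
    and "(1\<^sub>m n - D) * (1\<^sub>m n - D) = 1\<^sub>m n - D" and "(1\<^sub>m n - D) + D = 1\<^sub>m n"
proof -
  show DC: "D * (1\<^sub>m n - D) = 0\<^sub>m n n"
    using D by (simp add: mult_minus_distrib_mat[OF D one_carrier_mat D] DD)
  show "(1\<^sub>m n - D) * D = 0\<^sub>m n n"
    using D by (simp add: minus_mult_distrib_mat[OF one_carrier_mat D D] DD)
  show "(1\<^sub>m n - D) * (1\<^sub>m n - D) = 1\<^sub>m n - D"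
    using D DC by (simp add: minus_mult_distrib_mat[OF one_carrier_mat D minus_carrier_mat[OF D]])
      (rule eq_matI, auto)
  show "(1\<^sub>m n - D) + D = 1\<^sub>m n"
    using D by (intro eq_matI) auto
qed

lemma idempotent_nonzero_fixed_vec:
  fixes E :: "'a::semiring_1 mat"
  assumes E: "E \<in> carrier_mat n n" and EE: "E * E = E" and nz: "E \<noteq> 0\<^sub>m n n"
  obtains c where "c \<in> carrier_vec n" and "c \<noteq> 0\<^sub>v n" and "E *\<^sub>v c = c"
proof -
  have "\<exists>i<n. \<exists>j<n. E $$ (i, j) \<noteq> 0"
  proof (rule ccontr)
    assume "\<not> ?thesis"
    then have "E = 0\<^sub>m n n" using E by (intro eq_matI) auto
    with nz show False ..
  qed
  then obtain i j where ij: "i < n" "j < n" "E $$ (i, j) \<noteq> 0" by blast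
  have "col E j \<noteq> 0\<^sub>v n"
  proof
    assume "col E j = 0\<^sub>v n"
    then have "col E j $ i = 0" using ij by simp
    then show False using ij E by simp
  qed
  moreover have "E *\<^sub>v col E j = col E j"
    using col_mult2[OF E E ij(2)] EE by simp
  ultimately show thesis using E by (intro that) (auto simp: carrier_vecI)
qed

lemma idempotent_similar_fixing_unit_vec:
  fixes E :: "'a::bezout_domain mat"
  assumes E: "E \<in> carrier_mat n n" and EE: "E * E = E" and nz: "E \<noteq> 0\<^sub>m n n"
  obtains E' where "similar_mat E E'" and "E' \<in> carrier_mat n n" and "E' * E' = E'"
    and "E' *\<^sub>v unit_vec n 0 = unit_vec n 0"
proof -
  obtain c where c: "c \<in> carrier_vec n" and c0: "c \<noteq> 0\<^sub>v n" and Ec: "E *\<^sub>v c = c"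
    by (rule idempotent_nonzero_fixed_vec[OF E EE nz])
  obtain d U V where UV: "inverse_mats n U V" and Uc: "U *\<^sub>v c = d \<cdot>\<^sub>v unit_vec n 0"
    using bezout_reduce_vec[OF c] by blast
  have U: "U \<in> carrier_mat n n" and V: "V \<in> carrier_mat n n" and VU: "V * U = 1\<^sub>m n"
    using UV by (auto simp: inverse_mats_def)
  have VUc: "V *\<^sub>v (U *\<^sub>v c) = c"
    using U V VU c by (simp flip: assoc_mult_mat_vec)
  have "d \<noteq> 0"
  proof
    assume "d = 0"
    then have "c = 0\<^sub>v n"
      using VUc Uc V by (auto intro!: eq_vecI)
    with c0 show False ..
  qed
  define E' where "E' = U * E * V"
  have E': "E' \<in> carrier_mat n n" using U E V by (simp add: E'_def)
  have "E' *\<^sub>v (U *\<^sub>v c) = U *\<^sub>v (E *\<^sub>v (V *\<^sub>v (U *\<^sub>v c)))"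
    using U E V c by (simp add: E'_def assoc_mult_mat_vec[of _ n n _ n])
  also have "\<dots> = U *\<^sub>v c" by (simp only: VUc Ec)
  finally have fixed: "E' *\<^sub>v (d \<cdot>\<^sub>v unit_vec n 0) = d \<cdot>\<^sub>v unit_vec n 0"
    unfolding Uc .
  have "E' $$ (l, 0) = (if l = 0 then 1 else 0)" if "l < n" for l
    using arg_cong[OF fixed, of "\<lambda>v. v $ l"] that E' \<open>d \<noteq> 0\<close> by auto
  then have "E' *\<^sub>v unit_vec n 0 = unit_vec n 0"
    using E' by (intro eq_vecI) auto
  moreover have "similar_mat E E'" and "E' * E' = E'"
    using similar_mat_conj[OF UV E] inverse_mats_conj_idem[OF UV E EE] by (simp_all add: E'_def)
  ultimately show thesis using E' that by blast
qed

lemma idempotent_fixing_unit_vec_similar_block: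
  fixes E :: "'a::comm_ring_1 mat"
  assumes E: "E \<in> carrier_mat (Suc n) (Suc n)" and EE: "E * E = E"
    and fix0: "E *\<^sub>v unit_vec (Suc n) 0 = unit_vec (Suc n) 0"
  obtains E2 where "E2 \<in> carrier_mat n n" and "E2 * E2 = E2"
    and "similar_mat E (four_block_mat (1\<^sub>m 1) (0\<^sub>m 1 n) (0\<^sub>m n 1) E2)"
proof -
  define w where "w = mat 1 n (\<lambda>(_, j). E $$ (0, Suc j))"
  define E2 where "E2 = mat n n (\<lambda>(i, j). E $$ (Suc i, Suc j))"
  have w: "w \<in> carrier_mat 1 n" and E2: "E2 \<in> carrier_mat n n"
    by (simp_all add: w_def E2_def)
  have col0: "E $$ (i, 0) = (if i = 0 then 1 else 0)" if "i < Suc n" for i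
    using arg_cong[OF fix0, of "\<lambda>v. v $ i"] that E by simp
  have E_blocks: "E = four_block_mat (1\<^sub>m 1) w (0\<^sub>m n 1) E2"
    using E by (intro eq_matI) (auto simp: w_def E2_def col0 less_Suc_eq_0_disj)
  have "four_block_mat (1\<^sub>m 1) (w + w * E2) (0\<^sub>m n 1) (E2 * E2) = E * E"
    using w E2 by (subst (1 2) E_blocks) (simp add: mult_four_block_mat[of _ 1 1 _ n _ n _ _ 1 _ n])
  also have "\<dots> = four_block_mat (1\<^sub>m 1) w (0\<^sub>m n 1) E2"
    using EE E_blocks by simp
  finally have eq: "four_block_mat (1\<^sub>m 1) (w + w * E2) (0\<^sub>m n 1) (E2 * E2)
    = four_block_mat (1\<^sub>m 1) w (0\<^sub>m n 1) E2" .
  have "w + w * E2 \<in> carrier_mat 1 n" and "E2 * E2 \<in> carrier_mat n n"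
    using w E2 by auto
  then have blocks: "w + w * E2 = w" "E2 * E2 = E2"
    using four_block_mat_inj(2,4)[OF eq one_carrier_mat _ zero_carrier_mat _ one_carrier_mat w
        zero_carrier_mat E2] by auto
  have wE2: "w * E2 = 0\<^sub>m 1 n"
  proof (rule eq_matI)
    fix i j assume "i < dim_row (0\<^sub>m 1 n :: 'a mat)" and "j < dim_col (0\<^sub>m 1 n :: 'a mat)"
    then show "(w * E2) $$ (i, j) = 0\<^sub>m 1 n $$ (i, j)"
      using arg_cong[OF blocks(1), of "\<lambda>M. M $$ (i, j)"] w E2 by simp
  qed (use w E2 in auto)
  have "similar_mat E (four_block_mat (1\<^sub>m 1) (0\<^sub>m 1 n) (0\<^sub>m n 1) E2)"
    using four_block_drop_corner_similar[OF w E2 wE2] E_blocks by simp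
  with E2 blocks(2) show thesis by (rule that)
qed

lemma idempotent_similar_proj_mat:
  fixes E :: "'a::bezout_domain mat"
  assumes "E \<in> carrier_mat n n" and "E * E = E"
  shows "\<exists>r\<le>n. similar_mat E (proj_mat n r)"
  using assms
proof (induction n arbitrary: E)
  case 0
  then have "E = proj_mat 0 0" by (intro eq_matI) auto
  then show ?case using similar_mat_refl[OF "0.prems"(1)] by auto
next
  case (Suc n)
  show ?case
  proof (cases "E = 0\<^sub>m (Suc n) (Suc n)")
    case True
    then show ?thesis using similar_mat_refl[OF Suc.prems(1)] by (auto simp: proj_mat_0)
  next
    case False
    obtain E' where EE': "similar_mat E E'" and E': "E' \<in> carrier_mat (Suc n) (Suc n)"
      and E'E': "E' * E' = E'" and fix0: "E' *\<^sub>v unit_vec (Suc n) 0 = unit_vec (Suc n) 0"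
      using idempotent_similar_fixing_unit_vec[OF Suc.prems False] by blast
    obtain E2 where E2: "E2 \<in> carrier_mat n n" "E2 * E2 = E2"
      and E'E2: "similar_mat E' (four_block_mat (1\<^sub>m 1) (0\<^sub>m 1 n) (0\<^sub>m n 1) E2)"
      using idempotent_fixing_unit_vec_similar_block[OF E' E'E' fix0] by blast
    obtain r where r: "r \<le> n" and E2r: "similar_mat E2 (proj_mat n r)"
      using Suc.IH[OF E2] by blast
    have "similar_mat (four_block_mat (1\<^sub>m 1) (0\<^sub>m 1 n) (0\<^sub>m n 1) E2) (proj_mat (Suc n) (Suc r))"
      unfolding proj_mat_Suc
      by (rule similar_mat_four_block_0_0[OF similar_mat_refl[OF one_carrier_mat] E2r
            one_carrier_mat E2(1)])
    then show ?thesis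
      using r similar_mat_trans[OF EE' similar_mat_trans[OF E'E2]] by auto
  qed
qed

section \<open>Regular pairs: \<open>G H G = G\<close> and \<open>H G H = H\<close>\<close>

lemma proj_mat_factor_le:
  fixes g h :: "'a::idom mat"
  assumes g: "g \<in> carrier_mat n n" and h: "h \<in> carrier_mat n n"
    and g_range: "proj_mat n r * g = g" and hg: "h * g = proj_mat n s" and s: "s \<le> n"
  shows "s \<le> r"
proof (rule ccontr)
  assume "\<not> s \<le> r"
  then have rs: "r < s" by simp
  have g0: "g $$ (l, j) = 0" if "r \<le> l" "l < n" "j < n" for l j
    using proj_mat_mult_index[OF g, of l j r] g_range that by simp
  \<comment> \<open>The leading \<open>s \<times> s\<close> blocks satisfy \<open>h1 * g1 = 1\<close>, yet row \<open>r\<close> of \<open>g1\<close> vanishes.\<close>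
  define g1 where "g1 = mat s s (\<lambda>(i, j). g $$ (i, j))"
  define h1 where "h1 = mat s s (\<lambda>(i, j). h $$ (i, j))"
  have g1: "g1 \<in> carrier_mat s s" and h1: "h1 \<in> carrier_mat s s"
    by (simp_all add: g1_def h1_def)
  have "h1 * g1 = 1\<^sub>m s"
  proof (rule eq_matI)
    fix i j assume "i < dim_row (1\<^sub>m s :: 'a mat)" and "j < dim_col (1\<^sub>m s :: 'a mat)"
    then have i: "i < s" and j: "j < s" by auto
    have "(h1 * g1) $$ (i, j) = (\<Sum>l\<in>{0..<s}. h $$ (i, l) * g $$ (l, j))"
      using i j by (simp add: g1_def h1_def scalar_prod_def)
    also have "\<dots> = (\<Sum>l\<in>{0..<n}. h $$ (i, l) * g $$ (l, j))"
      using rs s j g0 by (intro sum.mono_neutral_left) auto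
    also have "\<dots> = (h * g) $$ (i, j)"
      using i j s g h by (simp add: scalar_prod_def)
    also have "\<dots> = 1\<^sub>m s $$ (i, j)"
      using i j s by (simp add: hg proj_mat_def)
    finally show "(h1 * g1) $$ (i, j) = 1\<^sub>m s $$ (i, j)" .
  qed (simp_all add: g1_def h1_def)
  then have "det h1 * det g1 = 1"
    using det_mult[OF h1 g1] by simp
  moreover have "det g1 = 0"
    using rs s g0 by (intro det_zero_row[OF g1, of r]) (auto simp: g1_def)
  ultimately show False by simp
qed

lemma regular_pair_absorb:
  fixes G H :: "'a::semiring_1 mat"
  assumes G: "G \<in> carrier_mat n n" and H: "H \<in> carrier_mat n n"
    and GHG: "G * H * G = G" and HGH: "H * G * H = H" and X: "X \<in> carrier_mat n m"
  shows "G * (H * (G * X)) = G * X" and "H * (G * (H * X)) = H * X"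
proof -
  have "G * (H * (G * X)) = G * H * G * X" and "H * (G * (H * X)) = H * G * H * X"
    using G H X by (simp_all add: assoc_mult_mat[of _ n n _ n _ m] mult_carrier_mat[of _ n n _ n])
  then show "G * (H * (G * X)) = G * X" and "H * (G * (H * X)) = H * X"
    by (simp_all add: GHG HGH)
qed

lemma regular_pair_conj:
  fixes G H :: "'a::comm_ring_1 mat"
  assumes G: "G \<in> carrier_mat n n" and H: "H \<in> carrier_mat n n"
    and GHG: "G * H * G = G" and HGH: "H * G * H = H"
    and e: "inverse_mats n Pe Qe" and f: "inverse_mats n Pf Qf"
  defines "g \<equiv> Qe * G * Pf" and "h \<equiv> Qf * H * Pe"
  shows "g * h = Qe * (G * H) * Pe" and "h * g = Qf * (H * G) * Pf"
    and "g * h * g = g" and "h * g * h = h"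
proof -
  have c: "Pe \<in> carrier_mat n n" "Qe \<in> carrier_mat n n" "Pf \<in> carrier_mat n n" "Qf \<in> carrier_mat n n"
    using e f by (auto simp: inverse_mats_def)
  note cancel = inverse_mats_cancel[OF e, where m = n] inverse_mats_cancel[OF f, where m = n]
  show "g * h = Qe * (G * H) * Pe" and "h * g = Qf * (H * G) * Pf"
    and "g * h * g = g" and "h * g * h = h"
    using G H c
    by (simp_all add: g_def h_def assoc_mult_mat[of _ n n _ n _ n] mult_carrier_mat[of _ n n _ n]
        cancel regular_pair_absorb[OF G H GHG HGH])
qed

lemma regular_pair_proj_mat_eq:
  fixes G H :: "'a::idom mat"
  assumes G: "G \<in> carrier_mat n n" and H: "H \<in> carrier_mat n n"
    and GHG: "G * H * G = G" and HGH: "H * G * H = H"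
    and GH_r: "similar_mat (G * H) (proj_mat n r)" and HG_s: "similar_mat (H * G) (proj_mat n s)"
    and "r \<le> n" and "s \<le> n"
  shows "r = s"
proof -
  obtain Pe Qe where e: "inverse_mats n Pe Qe" and GH: "G * H = Pe * proj_mat n r * Qe"
    using similar_mat_inverse_matsE[OF GH_r mult_carrier_mat[OF G H]] by blast
  obtain Pf Qf where f: "inverse_mats n Pf Qf" and HG: "H * G = Pf * proj_mat n s * Qf"
    using similar_mat_inverse_matsE[OF HG_s mult_carrier_mat[OF H G]] by blast
  define g where "g = Qe * G * Pf"
  define h where "h = Qf * H * Pe"
  have g: "g \<in> carrier_mat n n" and h: "h \<in> carrier_mat n n"
    using G H e f by (auto simp: g_def h_def inverse_mats_def)
  note conj = regular_pair_conj[OF G H GHG HGH e f, folded g_def h_def]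
  have "Qe * (Pe * proj_mat n r * Qe) * Pe = proj_mat n r"
    and "Qf * (Pf * proj_mat n s * Qf) * Pf = proj_mat n s"
    using e f by (auto simp: inverse_mats_def assoc_mult_mat[of _ n n _ n _ n] mult_carrier_mat[of _ n n _ n]
        inverse_mats_cancel[OF inverse_mats_sym[OF e], where m = n]
        inverse_mats_cancel[OF inverse_mats_sym[OF f], where m = n])
  then have gh: "g * h = proj_mat n r" and hg: "h * g = proj_mat n s"
    using conj(1,2) GH HG by simp_all
  have "proj_mat n r * g = g" and "proj_mat n s * h = h"
    using conj(3,4) by (simp_all add: gh hg)
  then show "r = s"
    using proj_mat_factor_le[OF g h _ hg] proj_mat_factor_le[OF h g _ gh] assms(7,8) by force
qed

lemma regular_pair_normal_forms:
  fixes G H :: "'a::bezout_domain mat"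
  assumes G: "G \<in> carrier_mat n n" and H: "H \<in> carrier_mat n n"
    and GHG: "G * H * G = G" and HGH: "H * G * H = H"
  obtains r Pe Qe Pf Qf where "inverse_mats n Pe Qe" and "G * H = Pe * proj_mat n r * Qe"
    and "inverse_mats n Pf Qf" and "H * G = Pf * proj_mat n r * Qf"
proof -
  have GH: "G * H \<in> carrier_mat n n" and HG: "H * G \<in> carrier_mat n n"
    using G H by simp_all
  have "G * H * (G * H) = G * H * G * H" and "H * G * (H * G) = H * G * H * G"
    using G H by (simp_all add: assoc_mult_mat[of _ n n _ n _ n] mult_carrier_mat[of _ n n _ n])
  then have "G * H * (G * H) = G * H" and "H * G * (H * G) = H * G"
    by (simp_all add: GHG HGH)
  then obtain r s where r: "r \<le> n" "similar_mat (G * H) (proj_mat n r)"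
    and s: "s \<le> n" "similar_mat (H * G) (proj_mat n s)"
    using idempotent_similar_proj_mat GH HG by metis
  have "r = s"
    by (rule regular_pair_proj_mat_eq[OF G H GHG HGH r(2) s(2) r(1) s(1)])
  obtain Pe Qe where "inverse_mats n Pe Qe" and "G * H = Pe * proj_mat n r * Qe"
    using similar_mat_inverse_matsE[OF r(2) GH] by blast
  moreover obtain Pf Qf where "inverse_mats n Pf Qf" and "H * G = Pf * proj_mat n r * Qf"
    using similar_mat_inverse_matsE[OF s(2) HG] \<open>r = s\<close> by blast
  ultimately show thesis by (rule that)
qed

lemma regular_pair_complements:
  fixes G H :: "'a::bezout_domain mat"
  assumes G: "G \<in> carrier_mat n n" and H: "H \<in> carrier_mat n n"
    and GHG: "G * H * G = G" and HGH: "H * G * H = H"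
  obtains W W' where "W \<in> carrier_mat n n" and "W' \<in> carrier_mat n n"
    and "W * W' + G * H = 1\<^sub>m n" and "W' * W + H * G = 1\<^sub>m n"
    and "G * H * W = 0\<^sub>m n n" and "W * (H * G) = 0\<^sub>m n n"
    and "H * G * W' = 0\<^sub>m n n" and "W' * (G * H) = 0\<^sub>m n n"
proof -
  note mat_simps = assoc_mult_mat[of _ n n _ n _ n] mult_carrier_mat[of _ n n _ n]
    add_mult_distrib_mat[of _ n n _ _ n] mult_add_distrib_mat[of _ n n _ n]
  obtain r Pe Qe Pf Qf where e: "inverse_mats n Pe Qe" and E: "G * H = Pe * proj_mat n r * Qe"
    and f: "inverse_mats n Pf Qf" and F: "H * G = Pf * proj_mat n r * Qf"
    by (rule regular_pair_normal_forms[OF G H GHG HGH])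
  define D :: "'a mat" where "D = proj_mat n r"
  define C where "C = 1\<^sub>m n - D"
  have c: "Pe \<in> carrier_mat n n" "Qe \<in> carrier_mat n n" "Pf \<in> carrier_mat n n" "Qf \<in> carrier_mat n n"
    and inv: "Pe * Qe = 1\<^sub>m n" "Qe * Pe = 1\<^sub>m n" "Pf * Qf = 1\<^sub>m n" "Qf * Pf = 1\<^sub>m n"
    using e f by (auto simp: inverse_mats_def)
  have D: "D \<in> carrier_mat n n" and C: "C \<in> carrier_mat n n"
    by (simp_all add: D_def C_def minus_carrier_mat)
  have "D * D = D" by (simp add: D_def proj_mat_idem)
  note compl = idempotent_complement[OF D this, folded C_def]
  note cancel = inverse_mats_cancel[OF e, where m = n] inverse_mats_cancel[OF inverse_mats_sym[OF e], where m = n]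
    inverse_mats_cancel[OF f, where m = n] inverse_mats_cancel[OF inverse_mats_sym[OF f], where m = n]
  have CD: "C * (D * X) = 0\<^sub>m n n" "D * (C * X) = 0\<^sub>m n n" "C * (C * X) = C * X"
    if "X \<in> carrier_mat n n" for X
    using compl that C D by (simp_all flip: mat_simps(1))
  \<comment> \<open>\<open>W\<close> and \<open>W'\<close> transport between the complements of the common normal form \<open>D\<close>.\<close>
  define W where "W = Pe * C * Qf"
  define W' where "W' = Pf * C * Qe"
  have "W \<in> carrier_mat n n" and "W' \<in> carrier_mat n n"
    using c C by (simp_all add: W_def W'_def)
  moreover have "W * W' + G * H = Pe * ((C + D) * Qe)" and "W' * W + H * G = Pf * ((C + D) * Qf)"
    using c C D inv by (simp_all add: W_def W'_def E F D_def[symmetric] mat_simps cancel CD)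
  moreover have "G * H * W = 0\<^sub>m n n" and "W * (H * G) = 0\<^sub>m n n"
    and "H * G * W' = 0\<^sub>m n n" and "W' * (G * H) = 0\<^sub>m n n"
    using c C D by (simp_all add: W_def W'_def E F D_def[symmetric] mat_simps cancel CD)
  ultimately show thesis
    using that compl(4) inv c by simp
qed

lemma regular_pair_unit_completion:
  fixes G H :: "'a::bezout_domain mat"
  assumes G: "G \<in> carrier_mat n n" and H: "H \<in> carrier_mat n n"
    and GHG: "G * H * G = G" and HGH: "H * G * H = H"
  obtains W W' where "W \<in> carrier_mat n n" and "inverse_mats n (G + W) (H + W')"
    and "G * H * W = 0\<^sub>m n n" and "W * (H * G) = 0\<^sub>m n n"
proof -
  note mat_simps = assoc_mult_mat[of _ n n _ n _ n] mult_carrier_mat[of _ n n _ n]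
    add_mult_distrib_mat[of _ n n _ _ n] mult_add_distrib_mat[of _ n n _ n]
  obtain W W' where W: "W \<in> carrier_mat n n" and W': "W' \<in> carrier_mat n n"
    and WW': "W * W' + G * H = 1\<^sub>m n" and W'W: "W' * W + H * G = 1\<^sub>m n"
    and GHW: "G * H * W = 0\<^sub>m n n" and WHG: "W * (H * G) = 0\<^sub>m n n"
    and HGW': "H * G * W' = 0\<^sub>m n n" and W'GH: "W' * (G * H) = 0\<^sub>m n n"
    by (rule regular_pair_complements[OF G H GHG HGH])
  have GHG': "G * (H * G) = G" and HGH': "H * (G * H) = H"
    using G H GHG HGH by (simp_all add: mat_simps)
  note absorb = regular_pair_absorb[OF G H GHG HGH]
  have "G * W' = G * (H * G * W')" and "W * H = W * (H * G) * H"
    and "H * W = H * (G * H * W)" and "W' * G = W' * (G * H) * G"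
    using G H W W' by (simp_all add: mat_simps GHG' HGH' absorb)
  then have "G * W' = 0\<^sub>m n n" and "W * H = 0\<^sub>m n n" and "H * W = 0\<^sub>m n n" and "W' * G = 0\<^sub>m n n"
    using G H GHW WHG HGW' W'GH by simp_all
  then have "(G + W) * (H + W') = W * W' + G * H" and "(H + W') * (G + W) = W' * W + H * G"
    using G H W W' by (simp_all add: mat_simps comm_add_mat[of _ n n])
  then have "inverse_mats n (G + W) (H + W')"
    using G H W W' WW' W'W by (simp add: inverse_mats_def)
  then show thesis using W GHW WHG by (intro that)
qed

lemma similar_mat_of_regular_intertwiner:
  fixes M N G H :: "'a::bezout_domain mat"
  assumes M: "M \<in> carrier_mat n n" and N: "N \<in> carrier_mat n n"
    and G: "G \<in> carrier_mat n n" and H: "H \<in> carrier_mat n n"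
    and GHG: "G * H * G = G" and HGH: "H * G * H = H"
    and MG: "M * G = G * N" and M_GH: "M * (G * H) = M" and HG_N: "H * G * N = N"
  shows "similar_mat M N"
proof -
  note mat_simps = assoc_mult_mat[of _ n n _ n _ n] mult_carrier_mat[of _ n n _ n]
    add_mult_distrib_mat[of _ n n _ _ n] mult_add_distrib_mat[of _ n n _ n]
  obtain W W' where W: "W \<in> carrier_mat n n" and PQ: "inverse_mats n (G + W) (H + W')"
    and GHW: "G * H * W = 0\<^sub>m n n" and WHG: "W * (H * G) = 0\<^sub>m n n"
    by (rule regular_pair_unit_completion[OF G H GHG HGH])
  have P: "G + W \<in> carrier_mat n n" and Q: "H + W' \<in> carrier_mat n n"
    and PQ1: "(G + W) * (H + W') = 1\<^sub>m n"
    using PQ by (simp_all add: inverse_mats_def)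
  have "M * W = M * (G * H) * W" by (simp add: M_GH)
  also have "\<dots> = M * (G * H * W)" using M G H W by (simp add: mat_simps)
  finally have MW: "M * W = 0\<^sub>m n n" using M GHW by simp
  have "W * N = W * (H * G * N)" by (simp add: HG_N)
  also have "\<dots> = W * (H * G) * N" using N G H W by (simp add: mat_simps)
  finally have WN: "W * N = 0\<^sub>m n n" using N WHG by simp
  have MP: "M * (G + W) = (G + W) * N"
    using M N G H W MG MW WN by (simp add: mat_simps)
  have "M = M * ((G + W) * (H + W'))" using M by (simp add: PQ1)
  also have "\<dots> = M * (G + W) * (H + W')" using M P Q by simp
  finally have "M = (G + W) * N * (H + W')" unfolding MP .
  then show ?thesis
    using similar_mat_inverse_matsI[OF PQ N] by simp
qed

section \<open>Powers and the Drazin inverse\<close>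

lemma pow_mat_commute:
  fixes A X :: "'a::semiring_1 mat"
  assumes A: "A \<in> carrier_mat n n" and X: "X \<in> carrier_mat n n" and AX: "A * X = X * A"
  shows "A ^\<^sub>m s * X = X * A ^\<^sub>m s"
proof -
  note mat_simps = assoc_mult_mat[of _ n n _ n _ n] mult_carrier_mat[of _ n n _ n]
  show ?thesis
  proof (induction s)
    case 0
    show ?case using A X by simp
  next
    case (Suc s)
    have "A ^\<^sub>m Suc s * X = A ^\<^sub>m s * (A * X)" using A X by (simp add: mat_simps)
    also have "\<dots> = (A ^\<^sub>m s * X) * A" unfolding AX using A X by (simp add: mat_simps)
    also have "\<dots> = X * A ^\<^sub>m Suc s" unfolding Suc using A X by (simp add: mat_simps)
    finally show ?case .
  qed
qed

lemma mult_pow_mat_commute: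
  fixes A X Y :: "'a::semiring_1 mat"
  assumes A: "A \<in> carrier_mat n n" and X: "X \<in> carrier_mat n n" and Y: "Y \<in> carrier_mat n m"
    and AX: "A * X = X * A"
  shows "X * (A ^\<^sub>m j * Y) = A ^\<^sub>m j * (X * Y)"
proof -
  have "X * (A ^\<^sub>m j * Y) = X * A ^\<^sub>m j * Y" using A X Y by (simp add: assoc_mult_mat[of _ n n _ n _ m])
  also have "\<dots> = A ^\<^sub>m j * X * Y" using pow_mat_commute[OF A X AX] by simp
  also have "\<dots> = A ^\<^sub>m j * (X * Y)" using A X Y by (simp add: assoc_mult_mat[of _ n n _ n _ m])
  finally show ?thesis .
qed

lemma pow_mat_Suc_left:
  fixes A :: "'a::semiring_1 mat"
  assumes "A \<in> carrier_mat n n"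
  shows "A ^\<^sub>m Suc s = A * A ^\<^sub>m s"
  using pow_mat_commute[OF assms assms refl] by simp

lemma pow_mat_push_through:
  fixes A B C :: "'a::semiring_1 mat"
  assumes A: "A \<in> carrier_mat n n" and B: "B \<in> carrier_mat n n" and C: "C \<in> carrier_mat n n"
    and ABA: "A * B * A = A * C * A"
  shows "(A * B) ^\<^sub>m s * A = A * (C * A) ^\<^sub>m s"
proof -
  note mat_simps = assoc_mult_mat[of _ n n _ n _ n] mult_carrier_mat[of _ n n _ n]
  show ?thesis
  proof (induction s)
    case 0
    show ?case using A B C by simp
  next
    case (Suc s)
    have "(A * B) ^\<^sub>m Suc s * A = (A * B) ^\<^sub>m s * (A * B * A)"
      using A B by (simp add: mat_simps)
    also have "\<dots> = ((A * B) ^\<^sub>m s * A) * (C * A)"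
      unfolding ABA using A B C by (simp add: mat_simps)
    also have "\<dots> = A * (C * A) ^\<^sub>m Suc s"
      unfolding Suc using A C by (simp add: mat_simps)
    finally show ?case .
  qed
qed

lemma drazin_inverse_pow_absorb:
  fixes M X :: "'a::semiring_1 mat"
  assumes M: "M \<in> carrier_mat n n" and MX: "drazin_inverse M X"
  obtains m where "\<And>s. m \<le> s \<Longrightarrow> M ^\<^sub>m Suc s * X = M ^\<^sub>m s"
proof -
  note mat_simps = assoc_mult_mat[of _ n n _ n _ n] mult_carrier_mat[of _ n n _ n]
  obtain m where X: "X \<in> carrier_mat n n" and comm: "M * X = X * M"
    and m: "M ^\<^sub>m (m + 1) * X = M ^\<^sub>m m"
    using MX M unfolding drazin_inverse_def by auto
  have "M ^\<^sub>m Suc s * X = M ^\<^sub>m s" if "m \<le> s" for s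
    using that
  proof (induction s rule: dec_induct)
    case base
    show ?case using m by simp
  next
    case (step s)
    have "M ^\<^sub>m Suc (Suc s) * X = M ^\<^sub>m Suc s * (M * X)" using M X by (simp add: mat_simps)
    also have "\<dots> = (M ^\<^sub>m Suc s * X) * M" unfolding comm using M X by (simp add: mat_simps)
    also have "\<dots> = M ^\<^sub>m Suc s" unfolding step.IH by simp
    finally show ?case .
  qed
  then show thesis by (rule that)
qed

lemma drazin_regular_pair:
  fixes A B C X :: "'a::comm_ring_1 mat"
  assumes A: "A \<in> carrier_mat n n" and B: "B \<in> carrier_mat n n"
    and C: "C \<in> carrier_mat n n" and X: "X \<in> carrier_mat n n"
    and ABA: "A * B * A = A * C * A"
    and comm: "A * B * X = X * (A * B)" and XMX: "X * (A * B) * X = X"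
  defines "G \<equiv> A * B * X * A" and "H \<equiv> C * X"
  shows "G * H = A * B * X" and "H * G = C * X * A"
    and "G * H * G = G" and "H * G * H = H"
proof -
  note mat_simps = assoc_mult_mat[of _ n n _ n _ n] mult_carrier_mat[of _ n n _ n]
  have XMX': "X * (A * (B * X)) = X" using XMX A B X by (simp add: mat_simps)
  have XMXY: "X * (A * (B * (X * Y))) = X * Y" if "Y \<in> carrier_mat n n" for Y
  proof -
    have "X * (A * (B * (X * Y))) = X * (A * B) * X * Y" using A B X that by (simp add: mat_simps)
    then show ?thesis using XMX by simp
  qed
  have "A * B * (X * X) = A * B * X * X" using A B X by (simp add: mat_simps)
  also have "\<dots> = X" using comm XMX by simp
  finally have XX: "A * (B * (X * X)) = X" using A B X by (simp add: mat_simps)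
  have "A * (C * X) = A * C * A * (B * (X * X))" using A B C X by (simp add: mat_simps XX)
  also have "\<dots> = A * B * A * (B * (X * X))" by (simp add: ABA)
  finally have ACX: "A * (C * X) = A * (B * X)" using A B C X by (simp add: mat_simps XX)
  show "G * H = A * B * X" and "H * G = C * X * A" and "G * H * G = G" and "H * G * H = H"
    using A B C X by (simp_all add: G_def H_def mat_simps ACX XMX' XMXY)
qed

lemma similar_mat_pow_of_drazin:
  fixes A B C X :: "'a::bezout_domain mat"
  assumes A: "A \<in> carrier_mat n n" and B: "B \<in> carrier_mat n n"
    and C: "C \<in> carrier_mat n n" and X: "X \<in> carrier_mat n n"
    and ABA: "A * B * A = A * C * A"
    and comm: "A * B * X = X * (A * B)" and XMX: "X * (A * B) * X = X"
    and absorb: "(A * B) ^\<^sub>m Suc k * X = (A * B) ^\<^sub>m k"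
  shows "similar_mat ((A * B) ^\<^sub>m Suc k) ((C * A) ^\<^sub>m Suc k)"
proof -
  note mat_simps = assoc_mult_mat[of _ n n _ n _ n] mult_carrier_mat[of _ n n _ n]
  define M where "M = A * B"
  define N where "N = C * A"
  define G where "G = M * X * A"
  define H where "H = C * X"
  have M: "M \<in> carrier_mat n n" and N: "N \<in> carrier_mat n n"
    and G: "G \<in> carrier_mat n n" and H: "H \<in> carrier_mat n n"
    using A B C X by (simp_all add: M_def N_def G_def H_def mat_simps)
  have regular: "G * H = M * X" "H * G = C * X * A" "G * H * G = G" "H * G * H = H"
    using drazin_regular_pair[OF A B C X ABA comm XMX] by (simp_all add: M_def G_def H_def)
  have MX: "M * X = X * M" using comm by (simp add: M_def)
  have push: "A * N ^\<^sub>m j = M ^\<^sub>m j * A" for j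
    using pow_mat_push_through[OF A B C ABA] by (simp add: M_def N_def)
  note XMk = mult_pow_mat_commute[OF M X _ MX, where m = n]
    and MMk = mult_pow_mat_commute[OF M M _ refl, where m = n]
  have "M ^\<^sub>m Suc k * G = G * N ^\<^sub>m Suc k"
    using M N X A by (simp add: G_def mat_simps push XMk MMk del: pow_mat.simps(2))
  moreover have "M ^\<^sub>m Suc k * (G * H) = M ^\<^sub>m Suc k"
  proof -
    have "M ^\<^sub>m Suc k * (G * H) = M ^\<^sub>m Suc k * X * M"
      using M X by (simp add: regular(1) MX mat_simps del: pow_mat.simps(2))
    then show ?thesis using absorb by (simp add: M_def)
  qed
  moreover have "H * G * N ^\<^sub>m Suc k = N ^\<^sub>m Suc k"
  proof -
    have "H * G * N ^\<^sub>m Suc k = C * (M ^\<^sub>m Suc k * X * A)"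
      using M N X A C by (simp add: regular(2) mat_simps push XMk del: pow_mat.simps(2))
    also have "\<dots> = C * (A * N ^\<^sub>m k)"
      using absorb by (simp add: push flip: M_def del: pow_mat.simps(2))
    also have "\<dots> = N * N ^\<^sub>m k" using A C N by (simp add: N_def mat_simps)
    also have "\<dots> = N ^\<^sub>m Suc k" using pow_mat_Suc_left[OF N] by simp
    finally show ?thesis .
  qed
  ultimately have "similar_mat (M ^\<^sub>m Suc k) (N ^\<^sub>m Suc k)"
    using similar_mat_of_regular_intertwiner[OF pow_carrier_mat[OF M] pow_carrier_mat[OF N] G H
        regular(3,4)]
    by blast
  then show ?thesis by (simp add: M_def N_def)
qed

theorem theorem3p4:
  fixes A B C :: "'a::bezout_domain mat"
  assumes "A \<in> carrier_mat n n" and "B \<in> carrier_mat n n" and "C \<in> carrier_mat n n"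
    and "A * B * A = A * C * A"
    and "drazin_invertible (A * B)"
  shows "\<exists>k::nat. \<forall>s\<ge>k. similar_mat ((A * B) ^\<^sub>m s) ((C * A) ^\<^sub>m s)"
proof -
  obtain X where X: "drazin_inverse (A * B) X"
    using assms(5) unfolding drazin_invertible_def by blast
  have AB: "A * B \<in> carrier_mat n n" using assms(1,2) by simp
  then have Xc: "X \<in> carrier_mat n n" and comm: "A * B * X = X * (A * B)"
    and XMX: "X * (A * B) * X = X"
    using X unfolding drazin_inverse_def by auto
  obtain m where absorb: "\<And>s. m \<le> s \<Longrightarrow> (A * B) ^\<^sub>m Suc s * X = (A * B) ^\<^sub>m s"
    using drazin_inverse_pow_absorb[OF AB X] by blast
  have "similar_mat ((A * B) ^\<^sub>m Suc t) ((C * A) ^\<^sub>m Suc t)" if "m \<le> t" for t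
    using similar_mat_pow_of_drazin[OF assms(1-3) Xc assms(4) comm XMX absorb[OF that]] .
  then have "\<forall>s\<ge>Suc m. similar_mat ((A * B) ^\<^sub>m s) ((C * A) ^\<^sub>m s)"
    by (metis Suc_le_D Suc_le_mono)
  then show ?thesis by blast
qed

end
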